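(* Let $\lambda>0$ and let $H_3=\mathbb{R}^3$ with coordinates $(x,y,z)$ carry the Lorentzian metric $g_1=-\frac{1}{\lambda^2}dx^2+dy^2+(x\,dy+dz)^2$, with Levi-Civita connection $\nabla$. Let $e_1=\partial_z$, $e_2=\partial_y-x\partial_z$, $e_3=\lambda\partial_x$, and let $V_3=\lambda\partial_x-\lambda y\partial_z\,(=-\lambda ye_1+e_3)$. Then every $V_3$-magnetic curve $\gamma(t)=(x(t),y(t),z(t))$, i.e. every smooth curve with $\nabla_{\gamma'}\gamma'=V_3\wedge\gamma'$, satisfies the system $y''+x'(z'+xy')=yx'+(z'+xy')$, $\frac{x''}{\lambda}+\lambda y'(z'+xy')=\lambda yy'$, $(z'+xy')'=-y'$.
   Context: $(e_1,e_2,e_3)$ is a $g_1$-orthonormal frame with $e_3$ timelike. For $X=\sum X^ie_i$, $Y=\sum Y^ie_i$ the vector product is defined in this frame by $X\wedge Y=(X^2Y^3-X^3Y^2)e_1+(X^3Y^1-X^1Y^3)e_2+(X^2Y^1-X^1Y^2)e_3$. Primes denote derivatives in $t$. *)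

theory Defs
  imports "HOL-Analysis.Analysis"
begin

text \<open>Points of H_3 = R^3 are vectors p :: real^3 with coordinates
  x = p$1, y = p$2, z = p$3.  Tangent vectors are also real^3, written in the
  coordinate basis (d/dx, d/dy, d/dz) = (axis 1 1, axis 2 1, axis 3 1).\<close>

definition g1 :: "real \<Rightarrow> real^3 \<Rightarrow> real^3 \<Rightarrow> real^3 \<Rightarrow> real" where
  "g1 lam p u v = - (1 / lam^2) * (u$1 * v$1) + u$2 * v$2
      + (p$1 * u$2 + u$3) * (p$1 * v$2 + v$3)"

definition gmat :: "real \<Rightarrow> real^3 \<Rightarrow> real^3^3" where
  "gmat lam p = (\<chi> i j. g1 lam p (axis i 1) (axis j 1))"

definition ginv :: "real \<Rightarrow> real^3 \<Rightarrow> real^3^3" where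
  "ginv lam p = matrix_inv (gmat lam p)"

definition pdiff :: "3 \<Rightarrow> (real^3 \<Rightarrow> real) \<Rightarrow> real^3 \<Rightarrow> real" where
  "pdiff i f p = deriv (\<lambda>s. f (p + s *\<^sub>R axis i 1)) 0"

definition christoffel :: "real \<Rightarrow> real^3 \<Rightarrow> 3 \<Rightarrow> 3 \<Rightarrow> 3 \<Rightarrow> real" where
  "christoffel lam p k i j = (1/2) * (\<Sum>l\<in>UNIV. ginv lam p $ k $ l *
     (pdiff i (\<lambda>q. gmat lam q $ j $ l) p + pdiff j (\<lambda>q. gmat lam q $ i $ l) p
      - pdiff l (\<lambda>q. gmat lam q $ i $ j) p))"

text \<open>Covariant acceleration nabla_{gamma'} gamma' of a curve, given its
  position p, velocity v and coordinate acceleration a at a time.\<close>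
definition cov_acc :: "real \<Rightarrow> real^3 \<Rightarrow> real^3 \<Rightarrow> real^3 \<Rightarrow> real^3" where
  "cov_acc lam p v a = (\<chi> k. a $ k + (\<Sum>i\<in>UNIV. \<Sum>j\<in>UNIV. christoffel lam p k i j * v$i * v$j))"

definition frame :: "real \<Rightarrow> real^3 \<Rightarrow> 3 \<Rightarrow> real^3" where
  "frame lam p i = (if i = 1 then axis 3 1
                    else if i = 2 then axis 2 1 - (p$1) *\<^sub>R axis 3 1
                    else lam *\<^sub>R axis 1 1)"

definition fcoord :: "real \<Rightarrow> real^3 \<Rightarrow> real^3 \<Rightarrow> real^3" where
  "fcoord lam p X = (THE c. X = (\<Sum>i\<in>UNIV. (c$i) *\<^sub>R frame lam p i))"

definition vprod :: "real \<Rightarrow> real^3 \<Rightarrow> real^3 \<Rightarrow> real^3 \<Rightarrow> real^3" where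
  "vprod lam p X Y = (let a = fcoord lam p X; b = fcoord lam p Y in
      (a$2 * b$3 - a$3 * b$2) *\<^sub>R frame lam p 1
    + (a$3 * b$1 - a$1 * b$3) *\<^sub>R frame lam p 2
    + (a$2 * b$1 - a$1 * b$2) *\<^sub>R frame lam p 3)"

definition V3 :: "real \<Rightarrow> real^3 \<Rightarrow> real^3" where
  "V3 lam p = lam *\<^sub>R axis 1 1 - (lam * p$2) *\<^sub>R axis 3 1"

end

(* The metric g_1 depends only on x, so its Christoffel symbols involve only the
   x-derivative of the metric matrix, and the frame components of a vector are read off
   by inverting the frame. The magnetic equation then becomes three coordinate equations:
   the first two are the claimed ones, and the third, combined with the second, says
   exactly that (z' + x y')' = -y'. *)
theory Submission
  imports Defs
begin

lemma matrix_inv_eqI: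
  fixes A :: "'a::comm_semiring_1^'n^'m" and B :: "'a^'m^'n"
  assumes "A ** B = mat 1" and "B ** A = mat 1"
  shows "matrix_inv A = B"
proof -
  let ?C = "matrix_inv A"
  have C: "A ** ?C = mat 1 \<and> ?C ** A = mat 1"
    unfolding matrix_inv_def by (rule someI[of _ B]) (use assms in blast)
  have "?C = ?C ** (A ** B)" using assms by (simp add: matrix_mul_rid)
  also have "\<dots> = (?C ** A) ** B" by (simp add: matrix_mul_assoc)
  also have "\<dots> = B" using C by (simp add: matrix_mul_lid)
  finally show ?thesis .
qed

definition metric_matrix :: "real \<Rightarrow> real \<Rightarrow> real^3^3" where
  "metric_matrix lam x =
     vector [vector [-(1 / lam^2), 0, 0], vector [0, 1 + x^2, x], vector [0, x, 1]]"

definition inverse_metric_matrix :: "real \<Rightarrow> real \<Rightarrow> real^3^3" where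
  "inverse_metric_matrix lam x =
     vector [vector [-(lam^2), 0, 0], vector [0, 1, - x], vector [0, - x, 1 + x^2]]"

definition metric_matrix_deriv :: "real \<Rightarrow> real^3^3" where
  "metric_matrix_deriv x = vector [vector [0, 0, 0], vector [0, 2 * x, 1], vector [0, 1, 0]]"

lemma gmat_eq: "gmat lam p = metric_matrix lam (p$1)"
  unfolding gmat_def g1_def metric_matrix_def
  by (simp add: vec_eq_iff forall_3 axis_def power2_eq_square)

lemma ginv_eq:
  assumes "lam > 0"
  shows "ginv lam p = inverse_metric_matrix lam (p$1)"
  unfolding ginv_def gmat_eq
  by (rule matrix_inv_eqI)
     (use assms in \<open>auto simp: metric_matrix_def inverse_metric_matrix_def matrix_matrix_mult_def
        mat_def vec_eq_iff forall_3 sum_3 field_simps power2_eq_square\<close>)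

lemma pdiff_comp_first_coord:
  assumes "(h has_real_derivative h') (at (p$1))"
  shows "pdiff i (\<lambda>q. h (q$1)) p = (if i = 1 then h' else 0)"
proof (cases "i = 1")
  case True
  have "((\<lambda>s. p$1 + s) has_real_derivative 1) (at 0)"
    by (auto intro!: derivative_eq_intros)
  with assms have "((\<lambda>s. h (p$1 + s)) has_real_derivative h') (at 0)"
    using DERIV_chain2[of h h' "\<lambda>s. p$1 + s" 0 1] by simp
  with True show ?thesis
    unfolding pdiff_def by (simp add: axis_def DERIV_imp_deriv)
next
  case False
  then show ?thesis
    unfolding pdiff_def by (simp add: axis_def)
qed

lemma metric_matrix_has_derivative:
  "((\<lambda>x. metric_matrix lam x $ j $ l) has_real_derivative metric_matrix_deriv x $ j $ l) (at x)"
  using exhaust_3[of j] exhaust_3[of l]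
  by (auto simp: metric_matrix_def metric_matrix_deriv_def intro!: derivative_eq_intros)

lemma pdiff_gmat:
  "pdiff i (\<lambda>q. gmat lam q $ j $ l) p = (if i = 1 then metric_matrix_deriv (p$1) $ j $ l else 0)"
  unfolding gmat_eq by (rule pdiff_comp_first_coord[OF metric_matrix_has_derivative])

lemma christoffel_eq:
  assumes "lam > 0"
  shows "christoffel lam p k i j = (1/2) * (\<Sum>l\<in>UNIV. inverse_metric_matrix lam (p$1) $ k $ l *
     ((if i = 1 then metric_matrix_deriv (p$1) $ j $ l else 0)
      + (if j = 1 then metric_matrix_deriv (p$1) $ i $ l else 0)
      - (if l = 1 then metric_matrix_deriv (p$1) $ i $ j else 0)))"
  unfolding christoffel_def ginv_eq[OF assms] pdiff_gmat ..

lemma cov_acc_nth: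
  assumes "lam > 0"
  shows "cov_acc lam p v a $ 1 = a$1 + lam^2 * v$2 * (v$3 + p$1 * v$2)"
    and "cov_acc lam p v a $ 2 = a$2 + v$1 * (v$3 + p$1 * v$2)"
    and "cov_acc lam p v a $ 3 = a$3 + (1 - (p$1)^2) * v$1 * v$2 - p$1 * v$1 * v$3"
  unfolding cov_acc_def christoffel_eq[OF assms]
  by (simp_all add: sum_3 inverse_metric_matrix_def metric_matrix_deriv_def
      algebra_simps power2_eq_square)

lemma fcoord_eq:
  assumes "lam > 0"
  shows "fcoord lam p X = vector [X$3 + p$1 * X$2, X$2, X$1 / lam]"
  unfolding fcoord_def
proof (rule the_equality)
  show "X = (\<Sum>i\<in>UNIV. vector [X$3 + p$1 * X$2, X$2, X$1 / lam] $ i *\<^sub>R frame lam p i)"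
    using assms by (simp add: sum_3 frame_def vec_eq_iff forall_3 axis_def)
next
  fix c :: "real^3"
  assume "X = (\<Sum>i\<in>UNIV. c $ i *\<^sub>R frame lam p i)"
  then have "X$1 = lam * c$3" "X$2 = c$2" "X$3 = c$1 - p$1 * c$2"
    by (simp_all add: sum_3 frame_def axis_def)
  with assms show "c = vector [X$3 + p$1 * X$2, X$2, X$1 / lam]"
    by (simp add: vec_eq_iff forall_3)
qed

lemma vprod_V3_nth:
  assumes "lam > 0"
  shows "vprod lam p (V3 lam p) v $ 1 = lam^2 * p$2 * v$2"
    and "vprod lam p (V3 lam p) v $ 2 = v$3 + p$1 * v$2 + p$2 * v$1"
    and "vprod lam p (V3 lam p) v $ 3 = - v$2 - p$1 * (v$3 + p$1 * v$2 + p$2 * v$1)"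
  unfolding vprod_def fcoord_eq[OF assms] Let_def
  using assms by (simp_all add: frame_def V3_def axis_def algebra_simps power2_eq_square)

lemma magnetic_equation_components:
  assumes lam: "lam > 0" and magnetic: "cov_acc lam p v a = vprod lam p (V3 lam p) v"
  shows "a$2 + v$1 * (v$3 + p$1 * v$2) = p$2 * v$1 + (v$3 + p$1 * v$2)"
    and "a$1 / lam + lam * v$2 * (v$3 + p$1 * v$2) = lam * p$2 * v$2"
    and "a$3 + v$1 * v$2 + a$2 * p$1 = - v$2"
proof -
  have eq: "cov_acc lam p v a $ k = vprod lam p (V3 lam p) v $ k" for k
    using magnetic by simp
  have e1: "a$1 = lam^2 * (p$2 * v$2 - v$2 * (v$3 + p$1 * v$2))"
    using eq[of 1] by (simp add: cov_acc_nth[OF lam] vprod_V3_nth[OF lam] algebra_simps)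
  have e2: "a$2 = p$2 * v$1 + (v$3 + p$1 * v$2) - v$1 * (v$3 + p$1 * v$2)"
    using eq[of 2] by (simp add: cov_acc_nth[OF lam] vprod_V3_nth[OF lam])
  have e3: "a$3 = - v$2 - p$1 * (v$3 + p$1 * v$2 + p$2 * v$1)
      - (1 - (p$1)^2) * v$1 * v$2 + p$1 * v$1 * v$3"
    using eq[of 3] by (simp add: cov_acc_nth[OF lam] vprod_V3_nth[OF lam] algebra_simps)
  show "a$2 + v$1 * (v$3 + p$1 * v$2) = p$2 * v$1 + (v$3 + p$1 * v$2)"
    using e2 by simp
  show "a$1 / lam + lam * v$2 * (v$3 + p$1 * v$2) = lam * p$2 * v$2"
    using e1 lam by (simp add: field_simps power2_eq_square)
  show "a$3 + v$1 * v$2 + a$2 * p$1 = - v$2"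
    unfolding e2 e3 by (simp add: algebra_simps power2_eq_square)
qed

lemma has_real_derivative_vec_nth:
  fixes f :: "real \<Rightarrow> real^'n"
  assumes "(f has_vector_derivative f') (at t)"
  shows "((\<lambda>s. f s $ i) has_real_derivative f' $ i) (at t)"
  using bounded_linear.has_vector_derivative[OF bounded_linear_vec_nth assms]
  by (simp add: has_real_derivative_iff_has_vector_derivative)

theorem mainTheorem3:
  fixes lam :: real and \<gamma> \<gamma>' \<gamma>'' :: "real \<Rightarrow> real^3"
  assumes lam: "lam > 0"
    and d1: "\<And>t. (\<gamma> has_vector_derivative \<gamma>' t) (at t)"
    and d2: "\<And>t. (\<gamma>' has_vector_derivative \<gamma>'' t) (at t)"
    and magnetic: "\<And>t. cov_acc lam (\<gamma> t) (\<gamma>' t) (\<gamma>'' t)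
                          = vprod lam (\<gamma> t) (V3 lam (\<gamma> t)) (\<gamma>' t)"
  shows "\<forall>t.
     \<gamma>'' t $ 2 + \<gamma>' t $ 1 * (\<gamma>' t $ 3 + \<gamma> t $ 1 * \<gamma>' t $ 2)
        = \<gamma> t $ 2 * \<gamma>' t $ 1 + (\<gamma>' t $ 3 + \<gamma> t $ 1 * \<gamma>' t $ 2)
   \<and> \<gamma>'' t $ 1 / lam + lam * \<gamma>' t $ 2 * (\<gamma>' t $ 3 + \<gamma> t $ 1 * \<gamma>' t $ 2)
        = lam * \<gamma> t $ 2 * \<gamma>' t $ 2
   \<and> ((\<lambda>s. \<gamma>' s $ 3 + \<gamma> s $ 1 * \<gamma>' s $ 2) has_real_derivative (- \<gamma>' t $ 2)) (at t)"
proof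
  fix t
  note components = magnetic_equation_components[OF lam magnetic[of t]]
  have "((\<lambda>s. \<gamma>' s $ 3 + \<gamma> s $ 1 * \<gamma>' s $ 2) has_real_derivative
      \<gamma>'' t $ 3 + (\<gamma>' t $ 1 * \<gamma>' t $ 2 + \<gamma>'' t $ 2 * \<gamma> t $ 1)) (at t)"
    by (intro DERIV_add DERIV_mult has_real_derivative_vec_nth d1 d2)
  with components show "\<gamma>'' t $ 2 + \<gamma>' t $ 1 * (\<gamma>' t $ 3 + \<gamma> t $ 1 * \<gamma>' t $ 2)
        = \<gamma> t $ 2 * \<gamma>' t $ 1 + (\<gamma>' t $ 3 + \<gamma> t $ 1 * \<gamma>' t $ 2)
   \<and> \<gamma>'' t $ 1 / lam + lam * \<gamma>' t $ 2 * (\<gamma>' t $ 3 + \<gamma> t $ 1 * \<gamma>' t $ 2)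
        = lam * \<gamma> t $ 2 * \<gamma>' t $ 2
   \<and> ((\<lambda>s. \<gamma>' s $ 3 + \<gamma> s $ 1 * \<gamma>' s $ 2) has_real_derivative (- \<gamma>' t $ 2)) (at t)"
    by (simp add: add.assoc)
qed

end
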